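(* Let $X,Y$ be real Hilbert spaces and $T:X\to Y$ a nonzero, injective, bounded linear operator. Let $x\in X$ and let $0\le\nu\le\gamma$ with $\gamma>0$. Then $$\sup_{\omega\in X,\ \|\omega\|=1}\|(T^*T)^\gamma\omega\|^{-\nu/\gamma}\,|\langle x,\omega\rangle|=N_{\nu/\gamma}\|x\|_{\nu:\gamma}$$ (as elements of $[0,\infty]$).
   Context: For $\gamma>0$, $X_\gamma:=\mathrm{range}((T^*T)^\gamma)$ with norm $\|x\|_\gamma:=\|(T^*T)^{-\gamma}x\|$. For $t>0$, $K^\gamma_t(x):=\inf_{x_1\in X_\gamma}\big(\|x-x_1\|^2+t^2\|x_1\|_\gamma^2\big)^{1/2}$, and for $0\le\nu\le\gamma$, $\|x\|_{\nu:\gamma}:=\sup_{t>0}t^{-\nu/\gamma}K^\gamma_t(x)\in[0,\infty]$. For $0<\theta<1$, $N_\theta:=\big(\theta^\theta(1-\theta)^{1-\theta}\big)^{-1/2}$, and $N_0:=N_1:=1$. *)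

theory Defs
  imports "HOL-Analysis.Analysis"
begin

text \<open>Fractional power A^g (g > 0) of a bounded, self-adjoint, positive (semidefinite)
  operator A on a real Hilbert space, via the norm-convergent binomial series:
  with c = onorm A and B = I - A/c (so 0 <= B <= I),
  A^g = c^g * sum_k (-1)^k (g choose k) B^k.
  For the zero operator we set A^g = 0.\<close>
definition op_powr :: "('a::real_inner \<Rightarrow> 'a) \<Rightarrow> real \<Rightarrow> 'a \<Rightarrow> 'a" where
  "op_powr A g x =
     (let c = onorm A; B = (\<lambda>y. y - (1 / c) *\<^sub>R A y) in
      if c = 0 then 0
      else (c powr g) *\<^sub>R (\<Sum>k. ((-1) ^ k * (g gchoose k)) *\<^sub>R (B ^^ k) x))"

definition TsT :: "('a::real_inner \<Rightarrow> 'b::real_inner) \<Rightarrow> 'a \<Rightarrow> 'a" where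
  "TsT T = adjoint T \<circ> T"

definition Xg :: "('a::real_inner \<Rightarrow> 'b::real_inner) \<Rightarrow> real \<Rightarrow> 'a set" where
  "Xg T g = range (op_powr (TsT T) g)"

definition gnorm :: "('a::real_inner \<Rightarrow> 'b::real_inner) \<Rightarrow> real \<Rightarrow> 'a \<Rightarrow> real" where
  "gnorm T g x = norm (the_inv_into UNIV (op_powr (TsT T) g) x)"

definition Kfun :: "('a::real_inner \<Rightarrow> 'b::real_inner) \<Rightarrow> real \<Rightarrow> real \<Rightarrow> 'a \<Rightarrow> real" where
  "Kfun T g t x = Inf ((\<lambda>x1. sqrt ((norm (x - x1))\<^sup>2 + t\<^sup>2 * (gnorm T g x1)\<^sup>2)) ` Xg T g)"

definition interp_norm :: "('a::real_inner \<Rightarrow> 'b::real_inner) \<Rightarrow> real \<Rightarrow> real \<Rightarrow> 'a \<Rightarrow> ereal" where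
  "interp_norm T nu g x = (SUP t\<in>{0<..}. ereal (t powr (- nu / g) * Kfun T g t x))"

definition Nconst :: "real \<Rightarrow> real" where
  "Nconst \<theta> = (if \<theta> = 0 \<or> \<theta> = 1 then 1
               else (\<theta> powr \<theta> * (1 - \<theta>) powr (1 - \<theta>)) powr (- 1 / 2))"

end

theory Submission
  imports Defs
begin

text \<open>For a bounded symmetric injective operator \<open>Q\<close> and \<open>t > 0\<close>, the K-functional
  \<open>K_t(x)\<close> is attained at the Tikhonov minimiser \<open>y\<close> of \<open>\<parallel>x - Q y\<parallel>\<^sup>2 + t\<^sup>2 \<parallel>y\<parallel>\<^sup>2\<close>,
  which solves \<open>Q (x - Q y) = t\<^sup>2 y\<close>. Splitting \<open>\<langle>x, w\<rangle> = \<langle>x - Q y, w\<rangle> + \<langle>y, Q w\<rangle>\<close> and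
  applying Cauchy-Schwarz twice gives \<open>|\<langle>x, w\<rangle>| \<le> K_t(x) sqrt (1 + \<parallel>Q w\<parallel>\<^sup>2 / t\<^sup>2)\<close>,
  with equality for \<open>w\<close> parallel to \<open>x - Q y\<close>. After multiplying by \<open>\<parallel>Q w\<parallel> powr -\<theta>\<close> the
  right-hand side becomes \<open>t powr -\<theta> K_t(x) h(t / \<parallel>Q w\<parallel>)\<close> with
  \<open>h(s) = s powr \<theta> sqrt (1 + 1/s\<^sup>2)\<close>, whose infimum over \<open>s > 0\<close> is \<open>N_\<theta>\<close>; taking
  suprema over \<open>t\<close> and \<open>w\<close> gives the identity.

  It remains to see that \<open>Q = (T\<^sup>*T)^\<gamma>\<close> qualifies. With \<open>c = \<parallel>T\<^sup>*T\<parallel>\<close> and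
  \<open>B = I - T\<^sup>*T / c\<close> a symmetric contraction, the binomial series for \<open>c^\<gamma> (I - B)^\<gamma>\<close>
  converges absolutely, so \<open>Q\<close> is bounded and symmetric. Since
  \<open>(T\<^sup>*T)^(\<gamma>+1) = T\<^sup>*T (T\<^sup>*T)^\<gamma>\<close>, injectivity reduces to \<open>0 < \<gamma> < 1\<close>, where all
  coefficients but the first are nonpositive with nonnegative sum, so that
  \<open>\<langle>Q x, x\<rangle> \<ge> \<gamma> c^(\<gamma>-1) \<parallel>T x\<parallel>\<^sup>2\<close>. The adjoint \<open>T\<^sup>*\<close> exists by the Riesz representation
  theorem, proved by minimising the strongly convex functional \<open>\<parallel>y\<parallel>\<^sup>2 - 2 f y\<close>.\<close>

section \<open>Hilbert space preliminaries\<close>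

lemma norm_midpoint_sq:
  fixes a b :: "'a::real_inner"
  shows "(norm ((1/2) *\<^sub>R (a + b)))\<^sup>2 = ((norm a)\<^sup>2 + (norm b)\<^sup>2)/2 - (norm (a - b))\<^sup>2/4"
proof -
  have "(norm ((1/2) *\<^sub>R (a + b)))\<^sup>2 = (1/4) * (inner a a + 2 * inner a b + inner b b)"
    unfolding norm_scaleR power_mult_distrib power2_norm_eq_inner
    by (simp add: inner_add_left inner_add_right inner_commute[of b a] power2_eq_square)
  moreover have "(norm (a - b))\<^sup>2 = inner a a - 2 * inner a b + inner b b"
    by (simp add: power2_norm_eq_inner inner_diff_left inner_diff_right inner_commute[of b a])
  ultimately show ?thesis by (simp add: power2_norm_eq_inner field_simps)
qed

lemma linear_coeff_zero_if_quadratic_nonneg: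
  fixes a b :: real
  assumes "\<And>s. 0 \<le> a * s\<^sup>2 + b * s" shows "b = 0"
proof (rule ccontr)
  assume b: "b \<noteq> 0"
  define c where "c = 2 * (\<bar>a\<bar> + 1)"
  have c: "0 < c" "a < c" unfolding c_def by (simp_all add: abs_if)
  have "a * (- b / c)\<^sup>2 + b * (- b / c) = b\<^sup>2 * (a / c - 1) / c"
    using c by (simp add: field_simps power2_eq_square)
  also have "\<dots> < 0"
    using b c by (intro divide_neg_pos mult_pos_neg) (auto simp: field_simps)
  finally show False using assms[of "- b / c"] by simp
qed

lemma strongly_midpoint_convex_minimizing_Cauchy:
  fixes F :: "'a::real_inner \<Rightarrow> real"
  assumes k: "0 < k"
    and conv: "\<And>a b. F ((1/2) *\<^sub>R (a + b)) \<le> (F a + F b)/2 - k * (norm (a - b))\<^sup>2"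
    and lower: "\<And>y. m \<le> F y" and Y: "\<And>n. F (Y n) < m + 1 / Suc n"
  shows "Cauchy Y"
proof (rule metric_CauchyI)
  fix e :: real assume e: "0 < e"
  obtain N :: nat where N: "1 / Suc N < k * e\<^sup>2"
    using reals_Archimedean[of "k * e\<^sup>2"] k e by (auto simp: inverse_eq_divide)
  have "dist (Y p) (Y q) < e" if "N \<le> p" "N \<le> q" for p q
  proof -
    have "1 / real (Suc p) \<le> 1 / Suc N" "1 / real (Suc q) \<le> 1 / Suc N"
      using that by (simp_all add: frac_le)
    moreover have "k * (norm (Y p - Y q))\<^sup>2 \<le> (F (Y p) + F (Y q))/2 - m"
      using conv[of "Y p" "Y q"] lower[of "(1/2) *\<^sub>R (Y p + Y q)"] by linarith
    moreover have avg: "w < c" if "w \<le> (u + v)/2 - m" "u < m + d1" "v < m + d2" "d1 \<le> c" "d2 \<le> c"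
      for u v w d1 d2 c :: real
      using that by (simp add: field_simps)
    ultimately have "k * (norm (Y p - Y q))\<^sup>2 < k * e\<^sup>2"
      using Y[of p] Y[of q] N by (meson avg order.strict_trans)
    then have "(norm (Y p - Y q))\<^sup>2 < e\<^sup>2" using k by simp
    then show ?thesis using e by (simp add: dist_norm power2_less_imp_less)
  qed
  then show "\<exists>M. \<forall>p\<ge>M. \<forall>q\<ge>M. dist (Y p) (Y q) < e" by blast
qed

text \<open>Completeness replaces compactness: by strong convexity, minimising sequences are Cauchy.\<close>
lemma strongly_midpoint_convex_has_min:
  fixes F :: "'a::{real_inner,complete_space} \<Rightarrow> real"
  assumes cont: "continuous_on UNIV F" and bdd: "\<And>y. m0 \<le> F y" and k: "0 < k"
    and conv: "\<And>a b. F ((1/2) *\<^sub>R (a + b)) \<le> (F a + F b)/2 - k * (norm (a - b))\<^sup>2"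
  shows "\<exists>z. \<forall>y. F z \<le> F y"
proof -
  define m where "m = Inf (range F)"
  have bd: "bdd_below (range F)" using bdd by (intro bdd_belowI2) auto
  have lower: "\<And>y. m \<le> F y" unfolding m_def using bd by (simp add: cInf_lower)
  have "\<exists>y. F y < m + 1 / Suc n" for n :: nat
    using cInf_lessD[of "range F" "m + 1 / Suc n"] unfolding m_def by auto
  then obtain Y where Y: "\<And>n. F (Y n) < m + 1 / Suc n" by metis
  have "Cauchy Y" by (rule strongly_midpoint_convex_minimizing_Cauchy[OF k conv lower Y])
  then obtain z where z: "Y \<longlonglongrightarrow> z" using Cauchy_convergent_iff convergent_def by blast
  have "(\<lambda>n. F (Y n)) \<longlonglongrightarrow> F z"
    by (rule continuous_on_tendsto_compose[OF cont z]) auto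
  moreover have "(\<lambda>n. F (Y n)) \<longlonglongrightarrow> m"
  proof (rule tendsto_sandwich[of "\<lambda>n. m" _ _ "\<lambda>n. m + 1 / Suc n"])
    show "(\<lambda>n. m + 1 / real (Suc n)) \<longlonglongrightarrow> m"
      using tendsto_add[OF tendsto_const[of m] LIMSEQ_inverse_real_of_nat] by (simp add: inverse_eq_divide)
    show "\<forall>\<^sub>F n in sequentially. F (Y n) \<le> m + 1 / Suc n" using Y by (simp add: less_imp_le)
  qed (use lower in auto)
  ultimately have "F z = m" using LIMSEQ_unique by blast
  then show ?thesis using lower by auto
qed

lemma riesz_representation:
  fixes f :: "'a::{real_inner,complete_space} \<Rightarrow> real"
  assumes f: "bounded_linear f" shows "\<exists>z. \<forall>x. f x = inner x z"
proof -
  interpret f: bounded_linear f by fact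
  obtain K where K: "\<And>x. norm (f x) \<le> norm x * K" using f.pos_bounded by blast
  define F where "F y = (norm y)\<^sup>2 - 2 * f y" for y
  have cont: "continuous_on UNIV F" unfolding F_def
    by (intro continuous_intros f.continuous_on)
  have bdd: "- (K\<^sup>2) \<le> F y" for y
    using K[of y] sum_power2_ge_zero[of "norm y - K" 0]
    unfolding F_def by (simp add: power2_eq_square algebra_simps)
  have conv: "F ((1/2) *\<^sub>R (a + b)) \<le> (F a + F b)/2 - (1/4) * (norm (a - b))\<^sup>2" for a b
    unfolding F_def norm_midpoint_sq by (simp add: f.add f.scaleR algebra_simps)
  obtain z where z: "\<And>y. F z \<le> F y"
    using strongly_midpoint_convex_has_min[OF cont bdd, of "1/4"] conv by force
  have "f h = inner h z" for h
  proof -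
    have "F (z + s *\<^sub>R h) = F z + (norm h)\<^sup>2 * s\<^sup>2 + (2 * inner z h - 2 * f h) * s" for s
      unfolding F_def power2_norm_eq_inner by (simp add: inner_add_left inner_add_right
          f.add f.scaleR inner_commute algebra_simps power2_eq_square)
    then have "0 \<le> (norm h)\<^sup>2 * s\<^sup>2 + (2 * inner z h - 2 * f h) * s" for s
      using z[of "z + s *\<^sub>R h"] by simp
    then have "2 * inner z h - 2 * f h = 0" by (rule linear_coeff_zero_if_quadratic_nonneg)
    then show ?thesis by (simp add: inner_commute)
  qed
  then show ?thesis by blast
qed

lemma adjoint_works_hilbert:
  fixes T :: "'a::{real_inner,complete_space} \<Rightarrow> 'b::real_inner"
  assumes "bounded_linear T"
  shows "T x \<bullet> y = x \<bullet> adjoint T y"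
proof -
  have "\<exists>z. \<forall>x. T x \<bullet> y = x \<bullet> z" for y
    using bounded_linear_compose[OF bounded_linear_inner_left assms]
    by (intro riesz_representation) simp
  then have "\<exists>g. \<forall>x y. T x \<bullet> y = x \<bullet> g y" by metis
  then show ?thesis unfolding adjoint_def by (rule someI2_ex) blast
qed

lemma summable_norm_cancel_complete:
  fixes f :: "nat \<Rightarrow> 'a::{real_normed_vector,complete_space}"
  assumes "summable (\<lambda>n. norm (f n))" shows "summable f"
proof -
  let ?S = "\<lambda>n. \<Sum>i<n. f i" and ?N = "\<lambda>n. \<Sum>i<n. norm (f i)"
  have le: "norm (?S m - ?S n) \<le> norm (?N m - ?N n)" if "n \<le> m" for m n
  proof -
    have "norm (?S m - ?S n) = norm (\<Sum>i\<in>{n..<m}. f i)"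
      using that by (simp add: atLeast0LessThan[symmetric] sum_diff_nat_ivl)
    also have "\<dots> \<le> (\<Sum>i\<in>{n..<m}. norm (f i))" by (rule norm_sum)
    also have "\<dots> \<le> norm (?N m - ?N n)"
      using that by (simp add: atLeast0LessThan[symmetric] sum_diff_nat_ivl)
    finally show ?thesis .
  qed
  have "Cauchy ?N" using assms by (simp add: summable_iff_convergent Cauchy_convergent_iff)
  have "Cauchy ?S"
    unfolding Cauchy_iff
  proof (intro allI impI)
    fix e :: real assume "0 < e"
    then obtain M where M: "\<And>m n. M \<le> m \<Longrightarrow> M \<le> n \<Longrightarrow> norm (?N m - ?N n) < e"
      using \<open>Cauchy ?N\<close> unfolding Cauchy_iff by blast
    have "norm (?S m - ?S n) < e" if "M \<le> m" "M \<le> n" for m n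
    proof (cases "n \<le> m")
      case True
      show ?thesis using le[OF True] M[OF that] by (rule order.strict_trans1)
    next
      case False
      then have "norm (?S n - ?S m) < e" using le[of m n] M[OF that(2,1)] by simp
      then show ?thesis by (simp add: norm_minus_commute)
    qed
    then show "\<exists>M. \<forall>m\<ge>M. \<forall>n\<ge>M. norm (?S m - ?S n) < e" by blast
  qed
  then show ?thesis by (simp add: summable_iff_convergent Cauchy_convergent_iff)
qed

lemma summable_norm_complete:
  fixes f :: "nat \<Rightarrow> 'a::{real_normed_vector,complete_space}"
  assumes "summable (\<lambda>n. norm (f n))" shows "norm (suminf f) \<le> (\<Sum>n. norm (f n))"
  using LIMSEQ_le[OF tendsto_norm[OF summable_LIMSEQ[OF summable_norm_cancel_complete[OF assms]]]
      summable_LIMSEQ[OF assms]] norm_sum by blast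

section \<open>Coefficients of the binomial series\<close>

text \<open>The Taylor coefficients of \<open>(1 - z) powr g\<close>; \<open>op_powr\<close> expands
  \<open>A^g = c^g (I - B)^g\<close> in them.\<close>
definition binseries_coeff :: "real \<Rightarrow> nat \<Rightarrow> real" where
  "binseries_coeff g k = (-1) ^ k * (g gchoose k)"

definition poch_ratio :: "real \<Rightarrow> nat \<Rightarrow> real" where
  "poch_ratio a m = pochhammer a m / fact m"

lemma poch_ratio_Suc: "poch_ratio a (Suc m) = poch_ratio a m * ((a + m) / (m + 1))"
  unfolding poch_ratio_def by (simp add: pochhammer_Suc field_simps)

lemma binseries_coeff_eq_poch_ratio: "binseries_coeff g k = poch_ratio (-g) k"
  unfolding binseries_coeff_def poch_ratio_def gbinomial_pochhammer
  by (simp add: power_mult_distrib[symmetric] flip: power_add mult_2)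

lemma sum_binseries_coeff: "(\<Sum>k\<le>m. binseries_coeff g k) = poch_ratio (1 - g) m"
proof -
  have "(\<Sum>k\<le>m. binseries_coeff g k) = (\<Sum>k\<le>m. (g gchoose k) * (- 1) ^ k)"
    unfolding binseries_coeff_def by (simp add: mult.commute)
  also have "\<dots> = (- 1) ^ m * (g - 1 gchoose m)" by (rule gbinomial_sum_lower_neg)
  finally show ?thesis
    unfolding poch_ratio_def gbinomial_pochhammer by (simp flip: power_add mult_2)
qed

text \<open>Once \<open>a + K \<ge> 0\<close>, every further factor \<open>(a + m) / (m + 1)\<close> of
  \<open>poch_ratio a\<close> is nonnegative, and at most \<open>1\<close> if \<open>a \<le> 1\<close>.\<close>
lemma poch_ratio_sign_stable:
  assumes "0 \<le> a + real K" "K \<le> m"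
  shows "(0 \<le> poch_ratio a K \<longrightarrow> 0 \<le> poch_ratio a m) \<and> (poch_ratio a K \<le> 0 \<longrightarrow> poch_ratio a m \<le> 0)"
  using assms(2)
proof (induction m rule: dec_induct)
  case (step m)
  define r where "r = (a + m) / (m + 1)"
  have r: "0 \<le> r" unfolding r_def using assms(1) step(1) by simp
  have "poch_ratio a (Suc m) = poch_ratio a m * r" unfolding r_def by (rule poch_ratio_Suc)
  then show ?case using step.IH r by (auto intro: mult_nonneg_nonneg mult_nonpos_nonneg)
qed simp

lemma poch_ratio_abs_antimono:
  assumes "0 \<le> a + real K" "a \<le> 1" "K \<le> m"
  shows "\<bar>poch_ratio a m\<bar> \<le> \<bar>poch_ratio a K\<bar>"
  using assms(3)
proof (induction m rule: dec_induct)
  case (step m)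
  define r where "r = (a + m) / (m + 1)"
  have r: "0 \<le> r" "r \<le> 1" unfolding r_def using assms(1,2) step(1) by simp_all
  have "\<bar>poch_ratio a (Suc m)\<bar> = \<bar>poch_ratio a m\<bar> * r"
    unfolding r_def[symmetric] poch_ratio_Suc abs_mult using r by simp
  also have "\<dots> \<le> \<bar>poch_ratio a m\<bar>" using r by (simp add: mult_left_le)
  finally show ?case using step.IH by simp
qed simp

lemma summable_if_eventually_nonneg_bounded_sums:
  fixes f :: "nat \<Rightarrow> real"
  assumes nonneg: "\<And>k. K \<le> k \<Longrightarrow> 0 \<le> f k" and bounded: "\<And>m. (\<Sum>k\<le>m. f k) \<le> M"
  shows "summable f"
proof -
  have shift: "(\<Sum>k\<le>n. f (k + K)) = (\<Sum>k\<le>n + K. f k) - (\<Sum>k<K. f k)" for n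
  proof (induction n)
    case 0
    show ?case by (simp add: lessThan_Suc_atMost[symmetric])
  qed simp
  then have "(\<Sum>k\<le>n. f (k + K)) \<le> M + \<bar>\<Sum>k<K. f k\<bar>" for n
    using shift[of n] bounded[of "n + K"] abs_ge_minus_self[of "\<Sum>k<K. f k"] by linarith
  then have "summable (\<lambda>k. f (k + K))" using nonneg by (intro bounded_imp_summable) auto
  then show ?thesis by (rule summable_iff_shift[THEN iffD1])
qed

lemma summable_abs_if_sign_stable_bounded_sums:
  fixes f :: "nat \<Rightarrow> real"
  assumes sign: "(\<forall>k\<ge>K. 0 \<le> f k) \<or> (\<forall>k\<ge>K. f k \<le> 0)" and bounded: "\<And>m. \<bar>\<Sum>k\<le>m. f k\<bar> \<le> M"
  shows "summable (\<lambda>k. \<bar>f k\<bar>)"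
  using sign
proof
  assume nonneg: "\<forall>k\<ge>K. 0 \<le> f k"
  have "summable f"
    using nonneg bounded abs_le_D1 by (intro summable_if_eventually_nonneg_bounded_sums) auto
  moreover have "\<forall>\<^sub>F k in sequentially. \<bar>f k\<bar> = f k"
    using nonneg by (auto simp: eventually_at_top_linorder intro!: exI[of _ K])
  ultimately show ?thesis using summable_cong by fastforce
next
  assume nonpos: "\<forall>k\<ge>K. f k \<le> 0"
  have "summable (\<lambda>k. - f k)"
    using nonpos bounded abs_le_D2 by (intro summable_if_eventually_nonneg_bounded_sums) (auto simp: sum_negf)
  moreover have "\<forall>\<^sub>F k in sequentially. \<bar>f k\<bar> = - f k"
    using nonpos by (auto simp: eventually_at_top_linorder intro!: exI[of _ K])
  ultimately show ?thesis using summable_cong by fastforce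
qed

lemma summable_abs_binseries_coeff:
  assumes "0 \<le> g" shows "summable (\<lambda>k. \<bar>binseries_coeff g k\<bar>)"
proof (rule summable_abs_if_sign_stable_bounded_sums)
  define K where "K = nat \<lceil>g\<rceil>"
  have gK: "g \<le> real K" unfolding K_def by linarith
  show "(\<forall>k\<ge>K. 0 \<le> binseries_coeff g k) \<or> (\<forall>k\<ge>K. binseries_coeff g k \<le> 0)"
  proof -
    have "(0 \<le> poch_ratio (-g) K \<longrightarrow> 0 \<le> poch_ratio (-g) k) \<and> (poch_ratio (-g) K \<le> 0 \<longrightarrow> poch_ratio (-g) k \<le> 0)"
      if "K \<le> k" for k
      using poch_ratio_sign_stable that gK by simp
    then show ?thesis unfolding binseries_coeff_eq_poch_ratio by (meson linorder_linear)
  qed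
  show "\<bar>\<Sum>k\<le>m. binseries_coeff g k\<bar> \<le> (\<Sum>j\<le>K. \<bar>poch_ratio (1 - g) j\<bar>)" for m
  proof (cases "m \<le> K")
    case True
    then show ?thesis unfolding sum_binseries_coeff
      by (intro member_le_sum[where f="\<lambda>j. \<bar>poch_ratio (1 - g) j\<bar>"]) auto
  next
    case False
    then have "\<bar>poch_ratio (1 - g) m\<bar> \<le> \<bar>poch_ratio (1 - g) K\<bar>"
      using assms gK by (intro poch_ratio_abs_antimono) auto
    also have "\<dots> \<le> (\<Sum>j\<le>K. \<bar>poch_ratio (1 - g) j\<bar>)"
      by (intro member_le_sum[where f="\<lambda>j. \<bar>poch_ratio (1 - g) j\<bar>"]) auto
    finally show ?thesis unfolding sum_binseries_coeff .
  qed
qed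

lemma summable_binseries_coeff: "0 \<le> g \<Longrightarrow> summable (binseries_coeff g)"
  by (rule summable_rabs_cancel[OF summable_abs_binseries_coeff])

lemma binseries_coeff_0 [simp]: "binseries_coeff g 0 = 1"
  by (simp add: binseries_coeff_def)

lemma binseries_coeff_zero_exp [simp]: "binseries_coeff 0 (Suc k) = 0"
  by (simp add: binseries_coeff_def)

lemma binseries_coeff_pascal:
  "binseries_coeff (g + 1) (Suc k) = binseries_coeff g (Suc k) - binseries_coeff g k"
  unfolding binseries_coeff_def gbinomial_Suc_Suc by (simp add: algebra_simps)

lemma binseries_coeff_nonpos:
  assumes "0 < g" "g < 1" "1 \<le> k" shows "binseries_coeff g k \<le> 0"
  using poch_ratio_sign_stable[of "-g" 1 k] assms
  by (simp add: binseries_coeff_eq_poch_ratio poch_ratio_def)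

lemma suminf_binseries_coeff_nonneg:
  assumes "0 < g" "g < 1" shows "0 \<le> suminf (binseries_coeff g)"
proof (rule LIMSEQ_le_const[OF summable_LIMSEQ[OF summable_binseries_coeff]])
  show "\<exists>N. \<forall>n\<ge>N. 0 \<le> sum (binseries_coeff g) {..<n}"
  proof (intro exI allI impI)
    fix n :: nat assume "1 \<le> n"
    then obtain m where "n = Suc m" using not0_implies_Suc by fastforce
    then have "sum (binseries_coeff g) {..<n} = poch_ratio (1 - g) m"
      by (simp add: lessThan_Suc_atMost sum_binseries_coeff)
    also have "\<dots> \<ge> 0" unfolding poch_ratio_def using assms
      by (intro divide_nonneg_pos less_imp_le[OF pochhammer_pos]) auto
    finally show "0 \<le> sum (binseries_coeff g) {..<n}" .
  qed
qed (use assms in simp)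


section \<open>Fractional powers of a positive operator\<close>

lemma suminf_mult_lower_bound:
  fixes a u :: "nat \<Rightarrow> real"
  assumes a: "summable a" "0 \<le> suminf a" "\<And>k. 0 < k \<Longrightarrow> a k \<le> 0"
    and u: "\<And>k. u k \<le> u 0" "0 \<le> u 0" and au: "summable (\<lambda>k. a k * u k)"
  shows "a 1 * (u 1 - u 0) \<le> (\<Sum>k. a k * u k)"
proof -
  define v where "v k = a k * (u k - u 0)" for k
  have v: "0 \<le> v k" for k
    using a(3)[of k] u(1)[of k] by (cases k) (auto simp: v_def mult_nonpos_nonpos)
  have sv: "summable v" unfolding v_def right_diff_distrib by (intro summable_diff au summable_mult2 a)
  have "v 1 = sum v {..<2}" by (simp add: v_def numeral_2_eq_2)
  also have "\<dots> \<le> suminf v" using sv v by (intro sum_le_suminf) auto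
  also have "\<dots> \<le> suminf a * u 0 + suminf v" using a(2) u(2) by simp
  also have "\<dots> = (\<Sum>k. a k * u 0) + suminf v" using suminf_mult2[OF a(1)] by simp
  also have "\<dots> = (\<Sum>k. a k * u 0 + v k)" by (intro suminf_add summable_mult2 a(1) sv)
  also have "\<dots> = (\<Sum>k. a k * u k)" by (simp add: v_def algebra_simps)
  finally show ?thesis by (simp add: v_def)
qed

locale positive_op =
  fixes A :: "'a::{real_inner,complete_space} \<Rightarrow> 'a"
  assumes bounded_linear_A: "bounded_linear A"
    and symmetric_A: "\<And>x y. inner (A x) y = inner x (A y)"
    and inner_A_nonneg: "\<And>x. 0 \<le> inner (A x) x"
    and norm_A_sq_le: "\<And>x. (norm (A x))\<^sup>2 \<le> onorm A * inner (A x) x"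
    and onorm_A_nonzero: "onorm A \<noteq> 0"
begin

definition B where "B y = y - (1 / onorm A) *\<^sub>R A y"

definition binseries where "binseries g x = (\<Sum>k. binseries_coeff g k *\<^sub>R (B ^^ k) x)"

lemma op_powr_eq_binseries: "op_powr A g x = onorm A powr g *\<^sub>R binseries g x"
  unfolding op_powr_def binseries_def Let_def B_def binseries_coeff_def using onorm_A_nonzero by simp

lemma onorm_A_pos: "0 < onorm A"
  using onorm_pos_le[OF bounded_linear_A] onorm_A_nonzero by simp

lemma A_eq_B: "A y = onorm A *\<^sub>R (y - B y)"
  unfolding B_def using onorm_A_pos by simp

lemma bounded_linear_B: "bounded_linear B"
  unfolding B_def[abs_def]
  by (intro bounded_linear_sub bounded_linear_ident bounded_linear_compose[OF bounded_linear_scaleR_right bounded_linear_A])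

lemma linear_B: "linear B"
  by (rule bounded_linear.linear[OF bounded_linear_B])

lemma B_symmetric: "inner (B x) y = inner x (B y)"
  unfolding B_def by (simp add: inner_diff_left inner_diff_right symmetric_A)

lemma norm_B_le: "norm (B y) \<le> norm y"
proof -
  define c p where "c = onorm A" and "p = inner (A y) y"
  have c: "0 < c" and p: "0 \<le> p" using onorm_A_pos inner_A_nonneg c_def p_def by auto
  have "(norm (B y))\<^sup>2 = (norm y)\<^sup>2 - 2 * p / c + (norm (A y))\<^sup>2 / c\<^sup>2"
    unfolding B_def c_def[symmetric] p_def power2_norm_eq_inner
    using c by (simp add: inner_diff_left inner_diff_right inner_commute[of y "A y"] power2_eq_square field_simps)
  also have "(norm (A y))\<^sup>2 / c\<^sup>2 \<le> p / c"
    using norm_A_sq_le[of y] c unfolding c_def[symmetric] p_def[symmetric]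
    by (simp add: power2_eq_square divide_simps mult.commute)
  finally have "(norm (B y))\<^sup>2 \<le> (norm y)\<^sup>2 - p / c" by simp
  moreover have "0 \<le> p / c" using c p by simp
  ultimately have "(norm (B y))\<^sup>2 \<le> (norm y)\<^sup>2" by linarith
  then show ?thesis by (rule power2_le_imp_le) simp
qed

lemma bounded_linear_B_pow: "bounded_linear (B ^^ k)"
  by (induction k) (simp_all add: id_def bounded_linear_ident bounded_linear_compose[OF bounded_linear_B] comp_def)

lemma norm_B_pow_le: "norm ((B ^^ k) y) \<le> norm y"
  by (induction k) (auto intro: order_trans[OF norm_B_le])

lemma B_pow_symmetric: "inner ((B ^^ k) x) y = inner x ((B ^^ k) y)"
proof (induction k arbitrary: x y)
  case (Suc k)
  have "inner ((B ^^ Suc k) x) y = inner ((B ^^ k) x) (B y)" by (simp add: B_symmetric)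
  also have "\<dots> = inner x ((B ^^ Suc k) y)" by (simp add: Suc funpow_Suc_right del: funpow.simps)
  finally show ?case .
qed simp

lemma summable_norm_binseries:
  assumes "0 \<le> g" shows "summable (\<lambda>k. norm (binseries_coeff g k *\<^sub>R (B ^^ k) x))"
proof (rule summable_comparison_test'[where g="\<lambda>k. \<bar>binseries_coeff g k\<bar> * norm x"])
  show "summable (\<lambda>k. \<bar>binseries_coeff g k\<bar> * norm x)"
    using summable_abs_binseries_coeff[OF assms] by (rule summable_mult2)
  show "norm (norm (binseries_coeff g k *\<^sub>R (B ^^ k) x)) \<le> \<bar>binseries_coeff g k\<bar> * norm x" for k
    using norm_B_pow_le[of k x] by (simp add: mult_left_mono)
qed

lemma summable_binseries:
  assumes "0 \<le> g" shows "summable (\<lambda>k. binseries_coeff g k *\<^sub>R (B ^^ k) x)"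
  using summable_norm_binseries[OF assms] by (rule summable_norm_cancel_complete)

lemma bounded_linear_binseries:
  assumes g: "0 \<le> g" shows "bounded_linear (binseries g)"
proof (rule bounded_linear_intro)
  fix x y
  show "binseries g (x + y) = binseries g x + binseries g y"
    unfolding binseries_def using linear_add[OF bounded_linear.linear[OF bounded_linear_B_pow]]
    by (simp add: scaleR_add_right suminf_add summable_binseries g)
next
  fix r x
  have "binseries g (r *\<^sub>R x) = (\<Sum>k. r *\<^sub>R (binseries_coeff g k *\<^sub>R (B ^^ k) x))"
    unfolding binseries_def using linear_scale[OF bounded_linear.linear[OF bounded_linear_B_pow]]
    by (simp add: mult.commute)
  then show "binseries g (r *\<^sub>R x) = r *\<^sub>R binseries g x"
    unfolding binseries_def by (simp add: suminf_scaleR_right summable_binseries g)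
next
  fix x
  have "norm (binseries g x) \<le> (\<Sum>k. norm (binseries_coeff g k *\<^sub>R (B ^^ k) x))"
    unfolding binseries_def by (intro summable_norm_complete summable_norm_binseries g)
  also have "\<dots> \<le> (\<Sum>k. \<bar>binseries_coeff g k\<bar> * norm x)"
    using norm_B_pow_le
    by (intro suminf_le summable_norm_binseries g summable_mult2 summable_abs_binseries_coeff)
       (simp add: mult_left_mono)
  also have "\<dots> = (\<Sum>k. \<bar>binseries_coeff g k\<bar>) * norm x"
    by (intro suminf_mult2[symmetric] summable_abs_binseries_coeff g)
  finally show "norm (binseries g x) \<le> norm x * (\<Sum>k. \<bar>binseries_coeff g k\<bar>)"
    by (simp add: mult.commute)
qed

lemma bounded_linear_op_powr: "0 \<le> g \<Longrightarrow> bounded_linear (op_powr A g)"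
  unfolding op_powr_eq_binseries[abs_def]
  by (intro bounded_linear_compose[OF bounded_linear_scaleR_right] bounded_linear_binseries)

lemma inner_binseries_left:
  assumes "0 \<le> g"
  shows "inner (binseries g x) y = (\<Sum>k. binseries_coeff g k * inner ((B ^^ k) x) y)"
  unfolding binseries_def
  using bounded_linear.suminf[OF bounded_linear_inner_left summable_binseries[OF assms]] by simp

lemma op_powr_symmetric:
  assumes "0 \<le> g" shows "inner (op_powr A g x) y = inner x (op_powr A g y)"
proof -
  have "inner ((B ^^ k) y) x = inner ((B ^^ k) x) y" "inner x ((B ^^ k) y) = inner y ((B ^^ k) x)" for k
    by (metis B_pow_symmetric inner_commute)+
  then have "inner (binseries g y) x = inner (binseries g x) y"
    by (simp add: inner_binseries_left[OF assms])
  then show ?thesis by (simp add: op_powr_eq_binseries inner_commute[of x])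
qed

lemma op_powr_0: "op_powr A 0 x = x"
proof -
  have "(\<lambda>k. binseries_coeff 0 k *\<^sub>R (B ^^ k) x) = (\<lambda>k. if k = 0 then x else 0)"
    by (rule ext, rename_tac k, case_tac k) simp_all
  then show ?thesis
    using sums_single[of 0 "\<lambda>_. x"] onorm_A_nonzero
    by (simp add: op_powr_eq_binseries binseries_def sums_iff)
qed

lemma binseries_add_1:
  assumes g: "0 \<le> g" shows "binseries (g + 1) x = binseries g x - B (binseries g x)"
proof -
  define s where "s k = binseries_coeff g k *\<^sub>R (B ^^ k) x" for k
  define t where "t k = binseries_coeff (g + 1) k *\<^sub>R (B ^^ k) x" for k
  have ss: "summable s" and st: "summable t"
    unfolding s_def t_def using g by (simp_all add: summable_binseries)
  have sBs: "summable (\<lambda>k. B (s k))" by (rule bounded_linear.summable[OF bounded_linear_B ss])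
  have tS: "t (Suc k) = s (Suc k) - B (s k)" for k
    unfolding t_def s_def binseries_coeff_pascal
    by (simp add: scaleR_diff_left linear_scale[OF linear_B])
  have "suminf t = t 0 + (\<Sum>k. t (Suc k))"
    using suminf_split_head[OF st] by simp
  also have "(\<Sum>k. t (Suc k)) = (\<Sum>k. s (Suc k)) - (\<Sum>k. B (s k))"
    unfolding tS by (intro suminf_diff[symmetric] sBs) (simp add: summable_Suc_iff ss)
  also have "(\<Sum>k. s (Suc k)) = suminf s - s 0" by (rule suminf_split_head[OF ss])
  also have "(\<Sum>k. B (s k)) = B (suminf s)" by (rule bounded_linear.suminf[OF bounded_linear_B ss, symmetric])
  moreover have "t 0 = s 0" by (simp add: t_def s_def)
  ultimately have "suminf t = suminf s - B (suminf s)" by simp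
  then show ?thesis unfolding binseries_def s_def[symmetric] t_def[symmetric] .
qed

lemma op_powr_add_1:
  assumes "0 \<le> g" shows "op_powr A (g + 1) x = A (op_powr A g x)"
proof -
  have "A (op_powr A g x) = onorm A *\<^sub>R (onorm A powr g *\<^sub>R (binseries g x - B (binseries g x)))"
    by (simp add: op_powr_eq_binseries A_eq_B linear_scale[OF linear_B] scaleR_diff_right)
  also have "\<dots> = op_powr A (g + 1) x"
    using onorm_A_pos by (simp add: op_powr_eq_binseries binseries_add_1[OF assms] powr_add mult.commute[of "onorm A"])
  finally show ?thesis ..
qed

lemma op_powr_zero_imp_zero_base:
  assumes injA: "\<And>x. A x = 0 \<Longrightarrow> x = 0"
    and g: "0 < g" "g < 1" and zero: "op_powr A g x = 0"
  shows "x = 0"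
proof -
  define u where "u k = inner ((B ^^ k) x) x" for k
  have abs_u_le: "\<bar>u k\<bar> \<le> u 0" for k
  proof -
    have "\<bar>u k\<bar> \<le> norm ((B ^^ k) x) * norm x" unfolding u_def by (rule Cauchy_Schwarz_ineq2)
    also have "\<dots> \<le> norm x * norm x" using norm_B_pow_le by (intro mult_right_mono) auto
    finally show ?thesis by (simp add: u_def power2_norm_eq_inner[symmetric] power2_eq_square)
  qed
  then have u_le: "u k \<le> u 0" for k by (meson abs_ge_self order_trans)
  have "summable (\<lambda>k. binseries_coeff g k * u k)"
  proof (rule summable_comparison_test'[where g="\<lambda>k. \<bar>binseries_coeff g k\<bar> * u 0"])
    show "summable (\<lambda>k. \<bar>binseries_coeff g k\<bar> * u 0)"
      using g by (intro summable_mult2 summable_abs_binseries_coeff) simp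
    show "norm (binseries_coeff g k * u k) \<le> \<bar>binseries_coeff g k\<bar> * u 0" for k
      by (simp add: abs_mult mult_left_mono abs_u_le)
  qed
  then have "binseries_coeff g 1 * (u 1 - u 0) \<le> (\<Sum>k. binseries_coeff g k * u k)"
    using g u_le by (intro suminf_mult_lower_bound summable_binseries_coeff
        suminf_binseries_coeff_nonneg binseries_coeff_nonpos) (auto simp: u_def)
  also have "\<dots> = 0"
    using zero inner_binseries_left[of g x x] onorm_A_pos g
    by (simp add: op_powr_eq_binseries u_def)
  finally have "g * inner (A x) x / onorm A \<le> 0"
    by (simp add: u_def B_def inner_diff_left binseries_coeff_def)
  then have "inner (A x) x \<le> 0"
    using g onorm_A_pos by (simp add: divide_le_0_iff mult_le_0_iff)
  then have "A x = 0" using norm_A_sq_le[of x] inner_A_nonneg[of x] by simp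
  then show ?thesis by (rule injA)
qed

lemma op_powr_zero_imp_zero:
  assumes injA: "\<And>x. A x = 0 \<Longrightarrow> x = 0" and g: "0 < g" and zero: "op_powr A g x = 0"
  shows "x = 0"
proof -
  obtain n :: nat where "g < n" using reals_Archimedean2 by blast
  then show ?thesis using g zero
  proof (induction n arbitrary: g)
    case (Suc n)
    show ?case
    proof (cases "g < 1")
      case True then show ?thesis using op_powr_zero_imp_zero_base[OF injA] Suc.prems by blast
    next
      case False
      then have "op_powr A (g - 1) x = 0"
        using op_powr_add_1[of "g - 1" x] injA Suc.prems by simp
      then show ?thesis using Suc.IH[of "g - 1"] Suc.prems False op_powr_0
        by (cases "g = 1") auto
    qed
  qed simp
qed

lemma inj_op_powr:
  assumes "\<And>x. A x = 0 \<Longrightarrow> x = 0" and "0 < g" shows "inj (op_powr A g)"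
proof (rule injI)
  fix u v assume "op_powr A g u = op_powr A g v"
  then have "op_powr A g (u - v) = 0"
    using linear_diff[OF bounded_linear.linear[OF bounded_linear_op_powr]] assms(2) by simp
  then have "u - v = 0" using assms by (rule op_powr_zero_imp_zero[rotated 2]) auto
  then show "u = v" by simp
qed

end

section \<open>The weight function\<close>

text \<open>The infimum over \<open>s > 0\<close> is \<open>Nconst \<theta>\<close>, attained at \<open>s = sqrt ((1 - \<theta>) / \<theta>)\<close>
  for \<open>0 < \<theta> < 1\<close> and approached as \<open>s \<rightarrow> \<infinity>\<close> or \<open>s \<rightarrow> 0\<close> for \<open>\<theta> = 0\<close> and \<open>\<theta> = 1\<close> respectively.\<close>
definition Nweight :: "real \<Rightarrow> real \<Rightarrow> real" where
  "Nweight \<theta> s = s powr \<theta> * sqrt (1 + 1 / s\<^sup>2)"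

lemma Nconst_pos: "0 \<le> \<theta> \<Longrightarrow> \<theta> \<le> 1 \<Longrightarrow> 0 < Nconst \<theta>"
  unfolding Nconst_def by auto

lemma Nweight_pos: "0 < s \<Longrightarrow> 0 < Nweight \<theta> s"
  unfolding Nweight_def by (simp add: add_pos_nonneg)

lemma ln_Nconst:
  assumes "0 < \<theta>" "\<theta> < 1"
  shows "ln (Nconst \<theta>) = - (\<theta> * ln \<theta> + (1 - \<theta>) * ln (1 - \<theta>)) / 2"
  using assms by (simp add: Nconst_def ln_powr ln_mult field_simps)

lemma ln_Nweight:
  assumes "0 < s" shows "ln (Nweight \<theta> s) = \<theta> * ln s + ln (1 + 1 / s\<^sup>2) / 2"
proof -
  have "0 < 1 + 1 / s\<^sup>2" using assms by (simp add: add_pos_nonneg)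
  then show ?thesis using assms by (simp add: Nweight_def ln_mult ln_powr ln_sqrt)
qed

lemma mult_sqrt_one_plus_inverse_sq:
  fixes s :: real assumes "0 < s" shows "s * sqrt (1 + 1 / s\<^sup>2) = sqrt (s\<^sup>2 + 1)"
proof -
  have "s\<^sup>2 * (1 + 1 / s\<^sup>2) = s\<^sup>2 + 1" using assms by (simp add: field_simps)
  then show ?thesis using assms by (metis real_sqrt_mult real_sqrt_abs abs_of_pos)
qed

text \<open>For \<open>0 < \<theta> < 1\<close> this is concavity of \<open>ln\<close> at the points \<open>1 / (1 - \<theta>)\<close> and
  \<open>1 / (\<theta> s\<^sup>2)\<close> with weights \<open>1 - \<theta>\<close> and \<open>\<theta>\<close>.\<close>
lemma Nconst_le_Nweight:
  assumes \<theta>: "0 \<le> \<theta>" "\<theta> \<le> 1" and s: "0 < s"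
  shows "Nconst \<theta> \<le> Nweight \<theta> s"
proof -
  consider "\<theta> = 0" | "\<theta> = 1" | "0 < \<theta> \<and> \<theta> < 1" using \<theta> by linarith
  then show ?thesis
  proof cases
    case 2
    then show ?thesis using s by (simp add: Nweight_def Nconst_def mult_sqrt_one_plus_inverse_sq)
  next
    case 3
    then have t: "0 < \<theta>" "\<theta> < 1" by auto
    have "(1 - \<theta>) * ln (1 / (1 - \<theta>)) + \<theta> * ln (1 / (\<theta> * s\<^sup>2))
          \<le> ln ((1 - \<theta>) * (1 / (1 - \<theta>)) + \<theta> * (1 / (\<theta> * s\<^sup>2)))"
      using concave_onD[OF ln_concave, of \<theta> "1 / (1 - \<theta>)" "1 / (\<theta> * s\<^sup>2)"] t s by simp
    also have "(1 - \<theta>) * (1 / (1 - \<theta>)) + \<theta> * (1 / (\<theta> * s\<^sup>2)) = 1 + 1 / s\<^sup>2"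
      using t by (simp add: field_simps)
    finally have "- (1 - \<theta>) * ln (1 - \<theta>) - \<theta> * (ln \<theta> + 2 * ln s) \<le> ln (1 + 1 / s\<^sup>2)"
      using t s by (simp add: ln_div ln_mult ln_realpow algebra_simps)
    then have "ln (Nconst \<theta>) \<le> ln (Nweight \<theta> s)"
      unfolding ln_Nconst[OF t] ln_Nweight[OF s] by (simp add: algebra_simps)
    then show ?thesis using Nconst_pos[OF \<theta>] Nweight_pos[OF s] by simp
  qed (use s in \<open>simp add: Nweight_def Nconst_def\<close>)
qed

lemma Nweight_approx_Nconst:
  assumes \<theta>: "0 \<le> \<theta>" "\<theta> \<le> 1" and e: "0 < e"
  shows "\<exists>s>0. Nweight \<theta> s \<le> Nconst \<theta> + e"
proof -
  have sqrt_le: "sqrt (e\<^sup>2 + 1) \<le> 1 + e"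
    using e by (intro real_le_lsqrt) (simp_all add: power2_eq_square algebra_simps)
  consider "\<theta> = 0" | "\<theta> = 1" | "0 < \<theta> \<and> \<theta> < 1" using \<theta> by linarith
  then show ?thesis
  proof cases
    case 1
    have "Nweight \<theta> (1 / e) = sqrt (e\<^sup>2 + 1)" using 1 e by (simp add: Nweight_def power_divide add.commute)
    then show ?thesis using 1 e sqrt_le by (intro exI[of _ "1/e"]) (simp add: Nconst_def)
  next
    case 2
    then show ?thesis using e sqrt_le
      by (intro exI[of _ e]) (simp add: Nweight_def Nconst_def mult_sqrt_one_plus_inverse_sq)
  next
    case 3
    then have t: "0 < \<theta>" "\<theta> < 1" by auto
    define s where "s = sqrt ((1 - \<theta>) / \<theta>)"
    have s: "0 < s" "s\<^sup>2 = (1 - \<theta>) / \<theta>" using t by (simp_all add: s_def)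
    have "1 + 1 / s\<^sup>2 = 1 / (1 - \<theta>)" unfolding s(2) using t by (simp add: field_simps)
    moreover have "ln s = (ln (1 - \<theta>) - ln \<theta>) / 2" unfolding s_def using t by (simp add: ln_sqrt ln_div)
    ultimately have "ln (Nweight \<theta> s) = \<theta> * ((ln (1 - \<theta>) - ln \<theta>) / 2) + ln (1 / (1 - \<theta>)) / 2"
      unfolding ln_Nweight[OF s(1)] by simp
    also have "\<dots> = ln (Nconst \<theta>)" unfolding ln_Nconst[OF t] using t by (simp add: ln_div field_simps)
    finally have "ln (Nweight \<theta> s) = ln (Nconst \<theta>)" .
    then have "Nweight \<theta> s = Nconst \<theta>" using Nconst_pos[OF \<theta>] Nweight_pos[OF s(1)] by simp
    then show ?thesis using s e by (intro exI[of _ s]) simp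
  qed
qed

lemma le_Nconst_mult_if_le_Nweight:
  assumes \<theta>: "0 \<le> \<theta>" "\<theta> \<le> 1" and r: "0 \<le> r" and le: "\<And>s. 0 < s \<Longrightarrow> a \<le> r * Nweight \<theta> s"
  shows "a \<le> Nconst \<theta> * r"
proof (rule field_le_epsilon)
  fix e :: real assume e: "0 < e"
  obtain s where s: "0 < s" and "Nweight \<theta> s \<le> Nconst \<theta> + e / (r + 1)"
    using Nweight_approx_Nconst[OF \<theta>, of "e / (r + 1)"] e r by auto
  then have "a \<le> r * (Nconst \<theta> + e / (r + 1))" using le[OF s] r by (meson mult_left_mono order_trans)
  also have "\<dots> \<le> Nconst \<theta> * r + e"
    using e r by (simp add: field_simps)
  finally show "a \<le> Nconst \<theta> * r + e" .
qed

lemma Nweight_rescale: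
  assumes t: "0 < t" and b: "0 < b"
  shows "b powr (- \<theta>) * sqrt (1 + b\<^sup>2 / t\<^sup>2) = t powr (- \<theta>) * Nweight \<theta> (t / b)"
proof -
  have "t powr (- \<theta>) * (t / b) powr \<theta> = b powr (- \<theta>)"
    using t b by (simp add: powr_divide powr_minus field_simps)
  then show ?thesis unfolding Nweight_def by (simp add: power_divide mult.assoc)
qed

lemma Cauchy_Schwarz_real_2:
  fixes a1 a2 b1 b2 :: real
  shows "a1 * b1 + a2 * b2 \<le> sqrt (a1\<^sup>2 + a2\<^sup>2) * sqrt (b1\<^sup>2 + b2\<^sup>2)"
proof -
  have "(a1 * b1 + a2 * b2)\<^sup>2 + (a1 * b2 - a2 * b1)\<^sup>2 = (a1\<^sup>2 + a2\<^sup>2) * (b1\<^sup>2 + b2\<^sup>2)"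
    by (simp add: power2_eq_square algebra_simps)
  then have "(a1 * b1 + a2 * b2)\<^sup>2 \<le> (a1\<^sup>2 + a2\<^sup>2) * (b1\<^sup>2 + b2\<^sup>2)"
    by (metis le_add_same_cancel1 zero_le_power2)
  then show ?thesis by (metis real_le_rsqrt real_sqrt_mult)
qed

section \<open>The K-functional of a symmetric operator\<close>

locale bounded_symmetric =
  fixes P :: "'a::{real_inner,complete_space} \<Rightarrow> 'a"
  assumes bounded_linear_P: "bounded_linear P"
    and symmetric_P: "\<And>u v. inner (P u) v = inner u (P v)"
begin

definition tikhonov where "tikhonov x t y = (norm (x - P y))\<^sup>2 + t\<^sup>2 * (norm y)\<^sup>2"

definition Kfunctional where "Kfunctional x t = Inf (range (\<lambda>y. sqrt (tikhonov x t y)))"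

lemma linear_P: "linear P"
  by (rule bounded_linear.linear[OF bounded_linear_P])

lemma tikhonov_midpoint_convex:
  "tikhonov x t ((1/2) *\<^sub>R (a + b)) \<le> (tikhonov x t a + tikhonov x t b)/2 - (t\<^sup>2/4) * (norm (a - b))\<^sup>2"
proof -
  have mid: "x - P ((1/2) *\<^sub>R (a + b)) = (1/2) *\<^sub>R ((x - P a) + (x - P b))"
    by (simp add: linear_add[OF linear_P] linear_scale[OF linear_P] algebra_simps flip: scaleR_add_left)
  have "(norm (x - P ((1/2) *\<^sub>R (a + b))))\<^sup>2 \<le> ((norm (x - P a))\<^sup>2 + (norm (x - P b))\<^sup>2) / 2"
    unfolding mid norm_midpoint_sq using zero_le_power2[of "norm ((x - P a) - (x - P b))"] by linarith
  then show ?thesis unfolding tikhonov_def norm_midpoint_sq[of a b] by (simp add: field_simps)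
qed

lemma tikhonov_has_min:
  assumes t: "0 < t"
  shows "\<exists>y. (\<forall>z. tikhonov x t y \<le> tikhonov x t z) \<and> P (x - P y) = t\<^sup>2 *\<^sub>R y"
proof -
  have cont: "continuous_on UNIV (tikhonov x t)" unfolding tikhonov_def[abs_def]
    by (intro continuous_intros linear_continuous_on bounded_linear_P)
  obtain y where y: "\<And>z. tikhonov x t y \<le> tikhonov x t z"
    using strongly_midpoint_convex_has_min[OF cont, of 0 "t\<^sup>2/4"] tikhonov_midpoint_convex t
    by (force simp: tikhonov_def)
  have "inner (P (x - P y) - t\<^sup>2 *\<^sub>R y) h = 0" for h
  proof -
    have "tikhonov x t (y + s *\<^sub>R h) = tikhonov x t y + ((norm (P h))\<^sup>2 + t\<^sup>2 * (norm h)\<^sup>2) * s\<^sup>2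
            + (2 * t\<^sup>2 * inner y h - 2 * inner (x - P y) (P h)) * s" for s
      unfolding tikhonov_def power2_norm_eq_inner
      by (simp add: linear_add[OF linear_P] linear_scale[OF linear_P] inner_diff_left inner_diff_right
          inner_add_left inner_add_right inner_commute power2_eq_square algebra_simps)
    then have "0 \<le> ((norm (P h))\<^sup>2 + t\<^sup>2 * (norm h)\<^sup>2) * s\<^sup>2 + (2 * t\<^sup>2 * inner y h - 2 * inner (x - P y) (P h)) * s" for s
      using y[of "y + s *\<^sub>R h"] by simp
    then have "2 * t\<^sup>2 * inner y h - 2 * inner (x - P y) (P h) = 0"
      by (rule linear_coeff_zero_if_quadratic_nonneg)
    then show ?thesis by (simp add: inner_diff_left symmetric_P)
  qed
  then show ?thesis using y vector_eq_rdot[of "P (x - P y) - t\<^sup>2 *\<^sub>R y" 0] by auto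
qed

lemma Kfunctional_eq_min:
  assumes "\<And>z. tikhonov x t y \<le> tikhonov x t z"
  shows "Kfunctional x t = sqrt (tikhonov x t y)"
  unfolding Kfunctional_def by (rule cInf_eq_minimum) (auto intro: assms)

lemma Kfunctional_nonneg: "0 < t \<Longrightarrow> 0 \<le> Kfunctional x t"
  using tikhonov_has_min Kfunctional_eq_min by (metis real_sqrt_ge_zero tikhonov_def zero_le_power2 add_nonneg_nonneg mult_nonneg_nonneg norm_ge_zero)

lemma abs_inner_le_Kfunctional:
  assumes t: "0 < t"
  shows "\<bar>inner x w\<bar> \<le> Kfunctional x t * sqrt ((norm w)\<^sup>2 + (norm (P w))\<^sup>2 / t\<^sup>2)"
proof -
  obtain y where y: "\<And>z. tikhonov x t y \<le> tikhonov x t z" using tikhonov_has_min[OF t] by blast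
  have "\<bar>inner x w\<bar> = \<bar>inner (x - P y) w + inner y (P w)\<bar>"
    by (simp add: inner_diff_left symmetric_P)
  also have "\<dots> \<le> norm (x - P y) * norm w + (t * norm y) * (norm (P w) / t)"
    using t Cauchy_Schwarz_ineq2[of "x - P y" w] Cauchy_Schwarz_ineq2[of y "P w"] by simp
  also have "\<dots> \<le> sqrt ((norm (x - P y))\<^sup>2 + (t * norm y)\<^sup>2) * sqrt ((norm w)\<^sup>2 + (norm (P w) / t)\<^sup>2)"
    by (rule Cauchy_Schwarz_real_2)
  also have "\<dots> = Kfunctional x t * sqrt ((norm w)\<^sup>2 + (norm (P w))\<^sup>2 / t\<^sup>2)"
    unfolding Kfunctional_eq_min[OF y] tikhonov_def by (simp add: power_mult_distrib power_divide)
  finally show ?thesis .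
qed

text \<open>Equality in \<open>abs_inner_le_Kfunctional\<close> holds for \<open>w\<close> along the residual \<open>x - P y\<close>
  of the minimiser \<open>y\<close>.\<close>
lemma abs_inner_eq_Kfunctional:
  assumes t: "0 < t" and K: "0 < Kfunctional x t"
  shows "\<exists>w. norm w = 1 \<and> \<bar>inner x w\<bar> = Kfunctional x t * sqrt (1 + (norm (P w))\<^sup>2 / t\<^sup>2)"
proof -
  obtain y where y: "\<And>z. tikhonov x t y \<le> tikhonov x t z" and normal: "P (x - P y) = t\<^sup>2 *\<^sub>R y"
    using tikhonov_has_min[OF t] by blast
  define K r where "K = Kfunctional x t" and "r = x - P y"
  have K2: "K\<^sup>2 = tikhonov x t y" using Kfunctional_eq_min[OF y] by (simp add: K_def tikhonov_def)
  have Pr: "P r = t\<^sup>2 *\<^sub>R y" using normal r_def by simp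
  have "inner x r = inner r r + inner (P y) r" by (simp add: r_def inner_diff_left)
  also have "inner (P y) r = t\<^sup>2 * inner y y" by (simp add: symmetric_P Pr)
  finally have inner_r: "inner x r = K\<^sup>2"
    unfolding K2 tikhonov_def r_def[symmetric] by (simp add: power2_norm_eq_inner)
  have norm_r: "(norm r)\<^sup>2 + (norm (P r))\<^sup>2 / t\<^sup>2 = K\<^sup>2"
    using t unfolding K2 tikhonov_def r_def[symmetric] Pr by (simp add: power2_eq_square field_simps)
  have "r \<noteq> 0" using norm_r K K_def linear_0[OF linear_P] by auto
  then have n: "0 < norm r" by simp
  define w where "w = (1 / norm r) *\<^sub>R r"
  have "\<bar>inner x w\<bar> = K\<^sup>2 / norm r" using inner_r n by (simp add: w_def)
  moreover have "1 + (norm (P w))\<^sup>2 / t\<^sup>2 = (K / norm r)\<^sup>2"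
    using n norm_r[symmetric] by (simp add: w_def linear_scale[OF linear_P] power_divide field_simps)
  then have "sqrt (1 + (norm (P w))\<^sup>2 / t\<^sup>2) = K / norm r"
    using K n by (simp add: K_def)
  ultimately have "\<bar>inner x w\<bar> = K * sqrt (1 + (norm (P w))\<^sup>2 / t\<^sup>2)"
    by (simp add: power2_eq_square)
  moreover have "norm w = 1" using n by (simp add: w_def)
  ultimately show ?thesis unfolding K_def by blast
qed

lemma norm_P_pos:
  assumes "inj P" "norm w = 1" shows "0 < norm (P w)"
proof -
  have "P w \<noteq> P 0" using assms by (metis injD norm_zero zero_neq_one)
  then show ?thesis by (simp add: linear_0[OF linear_P])
qed

lemma weighted_inner_le_Kfunctional:
  assumes w: "norm w = 1" "P w \<noteq> 0" and t: "0 < t"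
  shows "norm (P w) powr (- \<theta>) * \<bar>inner x w\<bar>
           \<le> t powr (- \<theta>) * Kfunctional x t * Nweight \<theta> (t / norm (P w))"
proof -
  have b: "0 < norm (P w)" using w by simp
  have "norm (P w) powr (- \<theta>) * \<bar>inner x w\<bar>
          \<le> norm (P w) powr (- \<theta>) * (Kfunctional x t * sqrt (1 + (norm (P w))\<^sup>2 / t\<^sup>2))"
    using abs_inner_le_Kfunctional[OF t, of x w] w by (intro mult_left_mono) auto
  then show ?thesis by (simp add: Nweight_rescale[OF t b, symmetric] mult_ac)
qed

lemma weighted_inner_eq_Kfunctional:
  assumes inj: "inj P" and t: "0 < t" and K: "0 < Kfunctional x t"
  shows "\<exists>w. norm w = 1 \<and> norm (P w) powr (- \<theta>) * \<bar>inner x w\<bar>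
           = t powr (- \<theta>) * Kfunctional x t * Nweight \<theta> (t / norm (P w))"
proof -
  obtain w where w: "norm w = 1"
    and eq: "\<bar>inner x w\<bar> = Kfunctional x t * sqrt (1 + (norm (P w))\<^sup>2 / t\<^sup>2)"
    using abs_inner_eq_Kfunctional[OF t K] by blast
  have "0 < norm (P w)" using norm_P_pos[OF inj w] .
  then show ?thesis using w eq by (intro exI[of _ w]) (simp add: Nweight_rescale[OF t, symmetric] mult_ac)
qed

lemma SUP_weighted_inner_le:
  assumes inj: "inj P" and \<theta>: "0 \<le> \<theta>" "\<theta> \<le> 1"
  shows "(SUP w\<in>{w. norm w = 1}. ereal (norm (P w) powr (- \<theta>) * \<bar>inner x w\<bar>))
           \<le> ereal (Nconst \<theta>) * (SUP t\<in>{0<..}. ereal (t powr (- \<theta>) * Kfunctional x t))"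
    (is "_ \<le> _ * ?S")
proof (rule SUP_least)
  fix w :: 'a assume "w \<in> {w. norm w = 1}"
  then have w: "norm w = 1" "P w \<noteq> 0" using norm_P_pos[OF inj] by auto
  have S: "ereal (t powr (- \<theta>) * Kfunctional x t) \<le> ?S" if "0 < t" for t
    using that by (intro SUP_upper) auto
  show "ereal (norm (P w) powr (- \<theta>) * \<bar>inner x w\<bar>) \<le> ereal (Nconst \<theta>) * ?S"
  proof (cases "?S")
    case (real r)
    have r: "0 \<le> r" using S[of 1] Kfunctional_nonneg[of 1 x] real by simp
    have "norm (P w) powr (- \<theta>) * \<bar>inner x w\<bar> \<le> Nconst \<theta> * r"
    proof (rule le_Nconst_mult_if_le_Nweight[OF \<theta> r])
      fix s :: real assume s: "0 < s"
      have sb: "0 < s * norm (P w)" using s w by simp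
      have "norm (P w) powr (- \<theta>) * \<bar>inner x w\<bar>
              \<le> (s * norm (P w)) powr (- \<theta>) * Kfunctional x (s * norm (P w)) * Nweight \<theta> s"
        using weighted_inner_le_Kfunctional[OF w sb, of \<theta> x] w by simp
      also have "\<dots> \<le> r * Nweight \<theta> s"
        using S[OF sb] real less_imp_le[OF Nweight_pos[OF s]] by (intro mult_right_mono) auto
      finally show "norm (P w) powr (- \<theta>) * \<bar>inner x w\<bar> \<le> r * Nweight \<theta> s" .
    qed
    then show ?thesis using real by simp
  qed (use Nconst_pos[OF \<theta>] S[of 1] in auto)
qed

lemma SUP_weighted_inner_ge:
  assumes inj: "inj P" and \<theta>: "0 \<le> \<theta>" "\<theta> \<le> 1" and nontrivial: "\<exists>u::'a. u \<noteq> 0"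
  shows "ereal (Nconst \<theta>) * (SUP t\<in>{0<..}. ereal (t powr (- \<theta>) * Kfunctional x t))
           \<le> (SUP w\<in>{w. norm w = 1}. ereal (norm (P w) powr (- \<theta>) * \<bar>inner x w\<bar>))"
    (is "_ \<le> ?L")
proof -
  have L_nonneg: "0 \<le> ?L"
  proof -
    obtain u :: 'a where "u \<noteq> 0" using nontrivial by blast
    then have "(1 / norm u) *\<^sub>R u \<in> {w. norm w = 1}" by simp
    then show ?thesis by (rule SUP_upper2) simp
  qed
  have pointwise: "ereal (Nconst \<theta>) * ereal (t powr (- \<theta>) * Kfunctional x t) \<le> ?L" if t: "0 < t" for t
  proof (cases "Kfunctional x t = 0")
    case False
    then have K: "0 < Kfunctional x t" using Kfunctional_nonneg[OF t, of x] by simp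
    then obtain w where w: "norm w = 1" and eq: "norm (P w) powr (- \<theta>) * \<bar>inner x w\<bar>
           = t powr (- \<theta>) * Kfunctional x t * Nweight \<theta> (t / norm (P w))"
      using weighted_inner_eq_Kfunctional[OF inj t] by blast
    have "Nconst \<theta> \<le> Nweight \<theta> (t / norm (P w))"
      using t norm_P_pos[OF inj w] by (intro Nconst_le_Nweight \<theta>) simp
    moreover have "0 \<le> t powr (- \<theta>) * Kfunctional x t" using K by simp
    ultimately have le: "Nconst \<theta> * (t powr (- \<theta>) * Kfunctional x t) \<le> norm (P w) powr (- \<theta>) * \<bar>inner x w\<bar>"
      unfolding eq by (simp add: mult_left_mono mult.commute[of "Nconst \<theta>"])
    have "ereal (Nconst \<theta>) * ereal (t powr (- \<theta>) * Kfunctional x t)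
            = ereal (Nconst \<theta> * (t powr (- \<theta>) * Kfunctional x t))" by simp
    also have "\<dots> \<le> ereal (norm (P w) powr (- \<theta>) * \<bar>inner x w\<bar>)" using le by simp
    also have "\<dots> \<le> ?L" using w by (intro SUP_upper) simp
    finally show ?thesis .
  qed (use L_nonneg in \<open>simp add: zero_ereal_def[symmetric]\<close>)
  have "ereal (Nconst \<theta>) * (SUP t\<in>{0<..}. ereal (t powr (- \<theta>) * Kfunctional x t))
          = (SUP t\<in>{0<..}. ereal (Nconst \<theta>) * ereal (t powr (- \<theta>) * Kfunctional x t))"
    using Nconst_pos[OF \<theta>] by (intro Sup_ereal_mult_left') auto
  also have "\<dots> \<le> ?L" using pointwise by (intro SUP_least) simp
  finally show ?thesis .
qed

end

lemma (in positive_op) bounded_symmetric_op_powr: "0 \<le> g \<Longrightarrow> bounded_symmetric (op_powr A g)"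
  unfolding bounded_symmetric_def by (simp add: bounded_linear_op_powr op_powr_symmetric)

section \<open>The operator \<open>T\<^sup>*T\<close>\<close>

lemma TsT_inner:
  fixes T :: "'a::{real_inner,complete_space} \<Rightarrow> 'b::real_inner"
  assumes "bounded_linear T"
  shows "inner (TsT T x) z = inner (T x) (T z)"
  unfolding TsT_def using adjoint_works_hilbert[OF assms, of z "T x"] by (simp add: inner_commute)

lemma TsT_zero_imp_zero:
  fixes T :: "'a::{real_inner,complete_space} \<Rightarrow> 'b::real_inner"
  assumes "bounded_linear T" "inj T" "TsT T y = 0" shows "y = 0"
proof -
  have "T y = T 0"
    using assms(3) TsT_inner[OF assms(1), of y y] linear_0[OF bounded_linear.linear[OF assms(1)]] by simp
  then show "y = 0" by (rule injD[OF assms(2)])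
qed

text \<open>\<open>Xg T g = range Q\<close> and \<open>gnorm T g (Q y) = norm y\<close> for injective \<open>Q = (T\<^sup>*T)^g\<close>.\<close>
lemma Kfun_eq_Kfunctional:
  assumes "bounded_symmetric (op_powr (TsT T) g)" and "inj (op_powr (TsT T) g)"
  shows "Kfun T g t x = bounded_symmetric.Kfunctional (op_powr (TsT T) g) x t"
  unfolding Kfun_def Xg_def gnorm_def bounded_symmetric.Kfunctional_def[OF assms(1)]
    bounded_symmetric.tikhonov_def[OF assms(1)]
  by (simp add: image_image the_inv_into_f_f[OF assms(2)])

lemma positive_op_TsT:
  fixes T :: "'a::{real_inner,complete_space} \<Rightarrow> 'b::real_inner"
  assumes bl: "bounded_linear T" and nz: "T \<noteq> (\<lambda>_. 0)"
  shows "positive_op (TsT T)"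
proof -
  interpret T: bounded_linear T by fact
  define A where "A = TsT T"
  have I: "inner (A x) z = inner (T x) (T z)" for x z unfolding A_def by (rule TsT_inner[OF bl])
  obtain K where K: "\<And>x. norm (T x) \<le> norm x * K" and K0: "0 < K" using T.pos_bounded by blast
  have norm_A_sq: "(norm (A x))\<^sup>2 \<le> norm (T x) * norm (T (A x))" for x
    using norm_cauchy_schwarz[of "T x" "T (A x)"] by (simp add: power2_norm_eq_inner I)
  have add: "A (x + y) = A x + A y" for x y
    by (rule vector_eq_rdot[THEN iffD1]) (simp add: I inner_add_left T.add)
  have scale: "A (r *\<^sub>R x) = r *\<^sub>R A x" for r x
    by (rule vector_eq_rdot[THEN iffD1]) (simp add: I T.scaleR)
  have "norm (A x) \<le> norm x * (K * K)" for x
  proof (cases "A x = 0")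
    case False
    have "(norm (A x))\<^sup>2 \<le> (norm x * K) * (norm (A x) * K)"
      using norm_A_sq[of x] by (rule order_trans) (intro mult_mono K; use K0 in simp)
    then have "norm (A x) * norm (A x) \<le> (norm x * (K * K)) * norm (A x)"
      by (simp add: power2_eq_square mult_ac)
    then show ?thesis using False by simp
  qed (use K0 in simp)
  then have blA: "bounded_linear A" by (rule bounded_linear_intro[OF add scale])
  have T_sq: "(norm (T z))\<^sup>2 \<le> onorm A * (norm z)\<^sup>2" for z
  proof -
    have "(norm (T z))\<^sup>2 = inner (A z) z" by (simp add: I power2_norm_eq_inner)
    also have "\<dots> \<le> onorm A * norm z * norm z"
      by (rule order_trans[OF norm_cauchy_schwarz]) (intro mult_right_mono onorm[OF blA]; simp)
    finally show ?thesis by (simp add: power2_eq_square mult.assoc)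
  qed
  have "(norm (A x))\<^sup>2 \<le> onorm A * inner (A x) x" for x
  proof (cases "A x = 0")
    case False
    have "((norm (A x))\<^sup>2)\<^sup>2 \<le> (norm (T x) * norm (T (A x)))\<^sup>2"
      using norm_A_sq[of x] by (intro power_mono) auto
    also have "\<dots> = (norm (T x))\<^sup>2 * (norm (T (A x)))\<^sup>2" by (simp add: power_mult_distrib)
    also have "\<dots> \<le> (norm (T x))\<^sup>2 * (onorm A * (norm (A x))\<^sup>2)" by (intro mult_left_mono T_sq) auto
    finally have "(norm (A x))\<^sup>2 * (norm (A x))\<^sup>2 \<le> (onorm A * (norm (T x))\<^sup>2) * (norm (A x))\<^sup>2"
      by (simp only: power2_eq_square[of "(norm (A x))\<^sup>2"] mult_ac)
    then have "(norm (A x))\<^sup>2 \<le> onorm A * (norm (T x))\<^sup>2"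
      by (rule mult_right_le_imp_le) (use False in simp)
    then show ?thesis by (simp add: I power2_norm_eq_inner)
  qed (simp add: I)
  moreover have "onorm A \<noteq> 0"
  proof
    assume "onorm A = 0"
    then have "T x = 0" for x using onorm_eq_0[OF blA] I[of x x] by simp
    then show False using nz by auto
  qed
  moreover have "inner (A x) y = inner x (A y)" for x y
    by (simp add: I inner_commute[of x] inner_commute[of "T x"])
  moreover have "0 \<le> inner (A x) x" for x by (simp add: I)
  ultimately show ?thesis unfolding A_def[symmetric] positive_op_def using blA by blast
qed

theorem proposition2:
  fixes T :: "'a::{real_inner, complete_space} \<Rightarrow> 'b::{real_inner, complete_space}"
    and x :: 'a and \<nu> \<gamma> :: real
  assumes "bounded_linear T" and "inj T" and "T \<noteq> (\<lambda>_. 0)"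
    and "0 \<le> \<nu>" and "\<nu> \<le> \<gamma>" and "0 < \<gamma>"
  shows "(SUP \<omega>\<in>{\<omega>. norm \<omega> = 1}.
            ereal (norm (op_powr (TsT T) \<gamma> \<omega>) powr (- \<nu> / \<gamma>) * \<bar>inner x \<omega>\<bar>))
         = ereal (Nconst (\<nu> / \<gamma>)) * interp_norm T \<nu> \<gamma> x"
proof -
  interpret positive_op "TsT T" by (rule positive_op_TsT) (use assms in auto)
  define Q where "Q = op_powr (TsT T) \<gamma>"
  have Q: "bounded_symmetric Q" unfolding Q_def using assms(6) by (simp add: bounded_symmetric_op_powr)
  have inj: "inj Q" unfolding Q_def using TsT_zero_imp_zero[OF assms(1,2)] assms(6) by (rule inj_op_powr)
  interpret bounded_symmetric Q by (rule Q)
  obtain u where "T u \<noteq> 0" using assms(3) by auto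
  then have nontrivial: "\<exists>u::'a. u \<noteq> 0" using linear_0[OF bounded_linear.linear[OF assms(1)]] by metis
  define \<theta> where "\<theta> = \<nu> / \<gamma>"
  have \<theta>: "0 \<le> \<theta>" "\<theta> \<le> 1" using assms(4-6) by (simp_all add: \<theta>_def)
  have "interp_norm T \<nu> \<gamma> x = (SUP t\<in>{0<..}. ereal (t powr (- \<theta>) * Kfunctional x t))"
    using Kfun_eq_Kfunctional[OF Q[unfolded Q_def] inj[unfolded Q_def]]
    by (simp add: interp_norm_def \<theta>_def Q_def)
  moreover have "- \<nu> / \<gamma> = - \<theta>" by (simp add: \<theta>_def)
  ultimately show ?thesis
    unfolding Q_def[symmetric] \<theta>_def[symmetric]
    using SUP_weighted_inner_le[OF inj \<theta>] SUP_weighted_inner_ge[OF inj \<theta> nontrivial]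
    by (simp only:) (rule antisym)
qed

end
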